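(* Let $d\ge2$ be fixed, $c_0$ a constant sufficiently large in terms of $d$ (e.g. $c_0=100d$), $R^2=2\log n+\log((\log n)^{c_0})$, and let $K'_n$ be the convex hull of $n$ independent points distributed according to the standard normal distribution on $\mathbb{R}^d$ conditioned on the ball $B(R)$. For positive constants $c,c_1$ define $\rho>0$ by $\rho^2=2\log n-\log\log n+\log\big((c\log\log n)^{-2}\big)$ and $r=\rho-5c_1^2/\rho$. Then for every $C>0$ the constants $c,c_1$ can be chosen so that, for all sufficiently large $n$, $K'_n$ contains the ball $B(r)$ with probability at least $1-(\log n)^{-C}$.
   Context: $B(x)$ denotes the closed ball of radius $x$ centered at the origin. *)

theory Defs
  imports "HOL-Analysis.Analysis"
begin

definition std_gaussian :: "'a::euclidean_space measure" where
  "std_gaussian = density lborel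
     (\<lambda>x. ennreal ((2 * pi) powr (- real DIM('a) / 2) * exp (- (norm x)\<^sup>2 / 2)))"

definition cond_gaussian :: "real \<Rightarrow> 'a::euclidean_space measure" where
  "cond_gaussian R = uniform_measure std_gaussian (cball 0 R)"

definition sample_law :: "nat \<Rightarrow> real \<Rightarrow> (nat \<Rightarrow> 'a::euclidean_space) measure" where
  "sample_law n R = PiM {..<n} (\<lambda>_. cond_gaussian R)"

end

theory Submission
  imports Defs "HOL-Probability.Probability" "HOL-Real_Asymp.Real_Asymp"
begin

text \<open>For a unit vector \<open>w\<close>, a Gaussian point conditioned on \<open>B(R)\<close> lies in the half-space
  \<open>x \<bullet> w \<ge> t\<close> with probability at least \<open>q = A exp (- t\<^sup>2 / 2) / t\<close>: the slab
  \<open>t \<le> x \<bullet> w \<le> t + 1/t\<close> contains a prism of volume \<open>\<ge> 1/t\<close>, sheared along a coordinate \<open>e\<close> with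
  \<open>\<bar>w \<bullet> e\<bar> \<ge> 1/d\<close>, on which \<open>norm x\<^sup>2 \<le> t\<^sup>2 + K\<close>. So all \<open>n\<close> points miss the half-space with
  probability at most \<open>exp (- q n)\<close>. Take a \<open>\<delta>\<close>-net \<open>N\<close> of the unit sphere with
  \<open>card N \<le> (4d/\<delta> + 3)\<^sup>d\<close>. If every \<open>w \<in> N\<close> is hit, then, all points having norm \<open>\<le> R\<close>, every
  unit vector is hit at level \<open>t - R \<delta>\<close>, and by separation \<open>B(t - R \<delta>) \<subseteq> K'\<^sub>n\<close>. The union bound
  leaves a failure probability \<open>\<le> card N * exp (- q n)\<close>.

  With \<open>t = \<rho> - 1/\<rho>\<close> and \<open>\<delta> = 4/(R \<rho>)\<close> one gets \<open>t - R \<delta> = \<rho> - 5/\<rho>\<close> and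
  \<open>card N \<le> (log n)\<^bsup>d+1\<^esup>\<close>, while \<open>n exp (- \<rho>\<^sup>2 / 2) / \<rho> \<ge> (c/2) log log n\<close> makes
  \<open>q n \<ge> (C + d + 1) log log n\<close> once \<open>c\<close> is large. Hence any \<open>c\<^sub>0 \<ge> 0\<close> and \<open>c\<^sub>1 = 1\<close> work, in
  every dimension \<open>d \<ge> 1\<close>.\<close>

section \<open>The standard Gaussian measure\<close>

lemma inner_sum_Basis_scaleR:
  fixes f :: "'a::euclidean_space \<Rightarrow> real"
  assumes "c \<in> Basis"
  shows "(\<Sum>b\<in>Basis. f b *\<^sub>R b) \<bullet> c = f c"
  using assms by (simp add: inner_sum_left inner_Basis if_distrib cong: if_cong)

lemma power2_norm_eq_sum_Basis:
  fixes x :: "'a::euclidean_space"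
  shows "(norm x)\<^sup>2 = (\<Sum>b\<in>Basis. (x \<bullet> b)\<^sup>2)"
  unfolding power2_norm_eq_inner by (subst euclidean_inner) (simp add: power2_eq_square)

lemma gaussian_density_eq_prod_normal_density:
  fixes f :: "'a::euclidean_space \<Rightarrow> real"
  shows "(2 * pi) powr (- real DIM('a) / 2) * exp (- (norm (\<Sum>b\<in>Basis. f b *\<^sub>R b))\<^sup>2 / 2)
     = (\<Prod>b\<in>(Basis::'a set). normal_density 0 1 (f b))"
proof -
  have "(2 * pi) powr (- real DIM('a) / 2) = ((2 * pi) powr (- 1 / 2)) ^ DIM('a)"
    by (simp add: powr_powr powr_realpow[symmetric])
  also have "(2 * pi) powr (- 1 / 2) = 1 / sqrt (2 * pi)"
    by (simp add: powr_minus_divide powr_half_sqrt)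
  finally have const: "(2 * pi) powr (- real DIM('a) / 2) = (\<Prod>b\<in>(Basis::'a set). 1 / sqrt (2 * pi))"
    by simp
  have "- (norm (\<Sum>b\<in>Basis. f b *\<^sub>R b))\<^sup>2 / 2 = (\<Sum>b\<in>(Basis::'a set). - (f b)\<^sup>2 / 2)"
    by (simp add: power2_norm_eq_sum_Basis inner_sum_Basis_scaleR sum_negf sum_divide_distrib)
  then have exp_eq: "exp (- (norm (\<Sum>b\<in>Basis. f b *\<^sub>R b))\<^sup>2 / 2) = (\<Prod>b\<in>(Basis::'a set). exp (- (f b)\<^sup>2 / 2))"
    by (simp add: exp_sum)
  show ?thesis
    unfolding const exp_eq prod.distrib[symmetric] by (intro prod.cong) (simp_all add: normal_density_def)
qed

lemma nn_integral_lborel_eq_PiM_Basis: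
  fixes h :: "'a::euclidean_space \<Rightarrow> ennreal"
  assumes [measurable]: "h \<in> borel_measurable borel"
  shows "(\<integral>\<^sup>+x. h x \<partial>lborel) = (\<integral>\<^sup>+f. h (\<Sum>b\<in>Basis. f b *\<^sub>R b) \<partial>(\<Pi>\<^sub>M b\<in>Basis. lborel))"
  by (subst lborel_eq) (simp add: nn_integral_distr)

interpretation lborel_product: product_sigma_finite "\<lambda>_::'a. lborel :: real measure"
  by standard

lemma sets_std_gaussian [measurable_cong, simp]: "sets (std_gaussian :: 'a::euclidean_space measure) = sets borel"
  by (simp add: std_gaussian_def)

lemma space_std_gaussian [simp]: "space (std_gaussian :: 'a::euclidean_space measure) = UNIV"
  by (simp add: std_gaussian_def)

lemma sets_cond_gaussian [measurable_cong, simp]: "sets (cond_gaussian R :: 'a::euclidean_space measure) = sets borel"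
  by (simp add: cond_gaussian_def)

lemma space_cond_gaussian [simp]: "space (cond_gaussian R :: 'a::euclidean_space measure) = UNIV"
  by (simp add: cond_gaussian_def)

lemma prob_space_std_gaussian: "prob_space (std_gaussian :: 'a::euclidean_space measure)"
proof
  have "emeasure (std_gaussian :: 'a measure) UNIV =
    (\<integral>\<^sup>+x. ennreal ((2 * pi) powr (- real DIM('a) / 2) * exp (- (norm x)\<^sup>2 / 2)) \<partial>(lborel::'a measure))"
    unfolding std_gaussian_def by (simp add: emeasure_density)
  also have "\<dots> = (\<integral>\<^sup>+f. (\<Prod>b\<in>(Basis::'a set). ennreal (normal_density 0 1 (f b))) \<partial>(\<Pi>\<^sub>M b\<in>Basis. lborel))"
    by (subst nn_integral_lborel_eq_PiM_Basis, measurable)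
       (simp only: gaussian_density_eq_prod_normal_density prod_ennreal normal_density_nonneg)
  also have "\<dots> = (\<Prod>b\<in>(Basis::'a set). (\<integral>\<^sup>+x. ennreal (normal_density 0 1 x) \<partial>lborel))"
    by (rule lborel_product.product_nn_integral_prod) auto
  also have "(\<integral>\<^sup>+x. ennreal (normal_density 0 1 x) \<partial>lborel) = 1"
    by (subst nn_integral_eq_integral) (auto simp: normal_density_nonneg)
  finally show "emeasure (std_gaussian :: 'a measure) (space std_gaussian) = 1"
    by (simp add: std_gaussian_def)
qed

interpretation std_gaussian: prob_space "std_gaussian :: 'a::euclidean_space measure"
  by (rule prob_space_std_gaussian)

context
  fixes R :: real
  assumes cball_nonnull: "emeasure std_gaussian (cball 0 R :: 'a::euclidean_space set) \<noteq> 0"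
begin

lemma prob_space_cond_gaussian: "prob_space (cond_gaussian R :: 'a measure)"
  unfolding cond_gaussian_def
  by (rule prob_space_uniform_measure) (use cball_nonnull in auto)

lemma measure_cond_gaussian_cball: "measure (cond_gaussian R :: 'a measure) (cball 0 R) = 1"
  using cball_nonnull unfolding cond_gaussian_def
  by (simp add: std_gaussian.emeasure_eq_measure)

lemma measure_cond_gaussian_ge:
  assumes "A \<in> sets borel"
  shows "measure std_gaussian (cball 0 R \<inter> A :: 'a set) \<le> measure (cond_gaussian R :: 'a measure) A"
proof -
  have "0 < measure std_gaussian (cball 0 R :: 'a set)"
    using cball_nonnull by (simp add: std_gaussian.emeasure_eq_measure zero_less_measure_iff)
  then have "measure std_gaussian (cball 0 R \<inter> A :: 'a set)
      \<le> measure std_gaussian (cball 0 R \<inter> A) / measure std_gaussian (cball 0 R :: 'a set)"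
    using std_gaussian.prob_le_1[of "cball 0 R"] by (simp add: le_divide_eq mult_left_le)
  also have "\<dots> = measure (cond_gaussian R :: 'a measure) A"
    unfolding cond_gaussian_def using assms cball_nonnull
    by (subst measure_uniform_measure) (auto simp: std_gaussian.emeasure_finite)
  finally show ?thesis .
qed

end

section \<open>Gaussian mass of a half-space\<close>

lemma prod_indicator_eq_if:
  assumes "finite I"
  shows "(\<Prod>b\<in>I. indicator (A b) (f b) :: 'c::comm_semiring_1) = (if \<forall>b\<in>I. f b \<in> A b then 1 else 0)"
  using assms by (induct I rule: finite_induct) auto

lemma nn_integral_indicator_affine_interval:
  fixes a s t h :: real
  assumes "a \<noteq> 0" "0 \<le> h"
  shows "ennreal \<bar>a\<bar> * (\<integral>\<^sup>+y. indicator {t..t+h} (s + a * y) \<partial>lborel) = ennreal h"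
proof -
  have "(\<integral>\<^sup>+x. indicator {t..t+h} x \<partial>lborel) = ennreal \<bar>a\<bar> * (\<integral>\<^sup>+y. indicator {t..t+h} (s + a * y) \<partial>lborel)"
    by (rule nn_integral_real_affine[OF _ assms(1)]) measurable
  then show ?thesis
    using assms(2) by simp
qed

text \<open>Integrate out the coordinate \<open>e\<close> first: for fixed other coordinates, the slab condition
  restricts it to an affine preimage of an interval of length \<open>h\<close>.\<close>
lemma emeasure_slab_prism:
  fixes w a :: "'a::euclidean_space" and t h :: real
  assumes e: "e \<in> Basis" and we: "w \<bullet> e \<noteq> 0" and h: "0 \<le> h"
  defines "S \<equiv> {x. t \<le> x \<bullet> w \<and> x \<bullet> w \<le> t + h \<and> (\<forall>b\<in>Basis-{e}. \<bar>x \<bullet> b - a \<bullet> b\<bar> \<le> 1)}"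
  shows "ennreal \<bar>w \<bullet> e\<bar> * emeasure lborel S = ennreal (h * 2 ^ (DIM('a) - 1))"
proof -
  define I where "I = (Basis::'a set) - {e}"
  have BI: "(Basis::'a set) = insert e I" and eI: "e \<notin> I" and fI: "finite I"
    using e by (auto simp: I_def)
  define P where "P g = (\<Prod>b\<in>I. indicator {a \<bullet> b - 1 .. a \<bullet> b + 1} (g b) :: ennreal)" for g :: "'a \<Rightarrow> real"
  define sg where "sg g = (\<Sum>b\<in>I. g b * (b \<bullet> w))" for g :: "'a \<Rightarrow> real"
  have S_coords: "indicator S (\<Sum>b\<in>Basis. f b *\<^sub>R b) = indicator {t..t+h} (sg f + w \<bullet> e * f e) * P f" for f
  proof -
    have "(\<Sum>b\<in>Basis. f b *\<^sub>R b) \<bullet> w = sg f + w \<bullet> e * f e"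
      unfolding BI sg_def using eI fI by (simp add: inner_sum_left inner_sum_right inner_commute algebra_simps)
    moreover have "(\<forall>b\<in>I. \<bar>(\<Sum>b\<in>Basis. f b *\<^sub>R b) \<bullet> b - a \<bullet> b\<bar> \<le> 1) \<longleftrightarrow> (\<forall>b\<in>I. f b \<in> {a \<bullet> b - 1 .. a \<bullet> b + 1})"
      by (intro ball_cong) (auto simp: inner_sum_Basis_scaleR I_def abs_le_iff)
    ultimately show ?thesis
      unfolding P_def prod_indicator_eq_if[OF fI] S_def I_def[symmetric] by (auto simp: indicator_def)
  qed
  have "emeasure lborel S = (\<integral>\<^sup>+f. indicator S (\<Sum>b\<in>Basis. f b *\<^sub>R b) \<partial>(\<Pi>\<^sub>M b\<in>Basis. lborel))"
    by (subst nn_integral_lborel_eq_PiM_Basis[symmetric]) (auto simp: S_def)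
  also have "\<dots> = (\<integral>\<^sup>+g. (\<integral>\<^sup>+y. indicator {t..t+h} (sg (g(e:=y)) + w \<bullet> e * (g(e:=y)) e) * P (g(e:=y)) \<partial>lborel) \<partial>(\<Pi>\<^sub>M b\<in>I. lborel))"
    unfolding S_coords unfolding BI
    by (rule lborel_product.product_nn_integral_insert[OF fI eI]) (unfold P_def sg_def, measurable)
  also have "\<dots> = (\<integral>\<^sup>+g. (\<integral>\<^sup>+y. indicator {t..t+h} (sg g + w \<bullet> e * y) \<partial>lborel) * P g \<partial>(\<Pi>\<^sub>M b\<in>I. lborel))"
  proof -
    have "sg (g(e:=y)) = sg g" "P (g(e:=y)) = P g" for g y
      unfolding sg_def P_def using eI by (auto intro!: sum.cong prod.cong)
    then show ?thesis
      by (simp add: nn_integral_multc)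
  qed
  finally have "ennreal \<bar>w \<bullet> e\<bar> * emeasure lborel S
      = (\<integral>\<^sup>+g. ennreal \<bar>w \<bullet> e\<bar> * ((\<integral>\<^sup>+y. indicator {t..t+h} (sg g + w \<bullet> e * y) \<partial>lborel) * P g) \<partial>(\<Pi>\<^sub>M b\<in>I. lborel))"
    by (simp only:) (rule nn_integral_cmult[symmetric], unfold P_def sg_def, measurable)
  also have "\<dots> = (\<integral>\<^sup>+g. ennreal h * P g \<partial>(\<Pi>\<^sub>M b\<in>I. lborel))"
    using nn_integral_indicator_affine_interval[OF we h] by (simp add: mult.assoc[symmetric])
  also have "\<dots> = ennreal h * (\<Prod>b\<in>I. (\<integral>\<^sup>+x. indicator {a \<bullet> b - 1 .. a \<bullet> b + 1} x \<partial>lborel))"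
    unfolding P_def
    by (subst nn_integral_cmult, measurable) (subst lborel_product.product_nn_integral_prod[OF fI], auto)
  also have "\<dots> = ennreal (h * 2 ^ (DIM('a) - 1))"
    using e h by (simp add: I_def ennreal_mult ennreal_power[symmetric])
  finally show ?thesis .
qed

lemma emeasure_slab_prism_ge:
  fixes w a :: "'a::euclidean_space" and t h :: real
  assumes e: "e \<in> Basis" and we: "w \<bullet> e \<noteq> 0" "\<bar>w \<bullet> e\<bar> \<le> 1" and h: "0 \<le> h"
  shows "ennreal h
    \<le> emeasure lborel {x. t \<le> x \<bullet> w \<and> x \<bullet> w \<le> t + h \<and> (\<forall>b\<in>Basis-{e}. \<bar>x \<bullet> b - a \<bullet> b\<bar> \<le> 1)}"
    (is "_ \<le> emeasure lborel ?S")
proof -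
  have "ennreal h \<le> ennreal (h * 2 ^ (DIM('a) - 1))"
    using h by (intro ennreal_leI) (simp add: mult_le_cancel_left1 one_le_power)
  also have "\<dots> = ennreal \<bar>w \<bullet> e\<bar> * emeasure lborel ?S"
    by (rule emeasure_slab_prism[OF e we(1) h, symmetric])
  also have "\<dots> \<le> emeasure lborel ?S"
    using we(2) mult_right_mono[of "ennreal \<bar>w \<bullet> e\<bar>" 1 "emeasure lborel ?S"] by (simp add: ennreal_le_1)
  finally show ?thesis .
qed

definition prism_excess :: "nat \<Rightarrow> real" where
  "prism_excess d = 3 + (real d + 1) ^ 4"

definition halfspace_mass_const :: "nat \<Rightarrow> real" where
  "halfspace_mass_const d = (2 * pi) powr (- real d / 2) * exp (- prism_excess d / 2)"

lemma halfspace_mass_const_pos: "0 < halfspace_mass_const d"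
  by (simp add: halfspace_mass_const_def)

lemma exists_Basis_abs_inner_ge:
  fixes w :: "'a::euclidean_space"
  assumes w: "norm w = 1"
  obtains e where "e \<in> Basis" "1 / real DIM('a) \<le> \<bar>w \<bullet> e\<bar>"
proof -
  have "\<exists>e\<in>Basis. 1 / real DIM('a) \<le> (w \<bullet> e)\<^sup>2"
  proof (rule ccontr)
    assume "\<not> ?thesis"
    then have "(\<Sum>b\<in>Basis. (w \<bullet> b)\<^sup>2) < (\<Sum>b\<in>(Basis::'a set). 1 / real DIM('a))"
      by (intro sum_strict_mono) auto
    then show False
      using w by (simp add: power2_norm_eq_sum_Basis[symmetric])
  qed
  then obtain e where e: "e \<in> Basis" "1 / real DIM('a) \<le> (w \<bullet> e)\<^sup>2" ..
  have "\<bar>w \<bullet> e\<bar> * \<bar>w \<bullet> e\<bar> \<le> \<bar>w \<bullet> e\<bar>"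
    using Basis_le_norm[OF e(1), of w] w by (intro mult_left_le) (auto simp: inner_commute)
  then show thesis
    using that e by (simp add: power2_eq_square[symmetric])
qed

lemma norm_le_if_inner_bounded:
  fixes w z :: "'a::euclidean_space"
  assumes w: "norm w = 1" and e: "e \<in> Basis" "1 / real DIM('a) \<le> \<bar>w \<bullet> e\<bar>"
    and zw: "\<bar>z \<bullet> w\<bar> \<le> 1" and zb: "\<forall>b\<in>Basis - {e}. \<bar>z \<bullet> b\<bar> \<le> 1"
  shows "norm z \<le> real DIM('a) * (real DIM('a) + 2)"
proof -
  define d where "d = real DIM('a)"
  have d1: "1 \<le> d"
    unfolding d_def using DIM_positive[where 'a='a] by linarith
  have sum_rest: "(\<Sum>b\<in>Basis - {e}. f b) \<le> d" if "\<And>b. b \<in> Basis - {e} \<Longrightarrow> f b \<le> 1" for f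
  proof -
    have "(\<Sum>b\<in>Basis - {e}. f b) \<le> (\<Sum>b\<in>(Basis::'a set) - {e}. 1)"
      using that by (intro sum_mono) auto
    then show ?thesis
      using e(1) by (simp add: d_def)
  qed
  have "z \<bullet> w = (z \<bullet> e) * (w \<bullet> e) + (\<Sum>b\<in>Basis - {e}. (z \<bullet> b) * (w \<bullet> b))"
    using e(1) by (simp add: euclidean_inner[of z w] sum.remove)
  moreover have "\<bar>\<Sum>b\<in>Basis - {e}. (z \<bullet> b) * (w \<bullet> b)\<bar> \<le> d"
  proof -
    have "\<bar>w \<bullet> b\<bar> \<le> 1" if "b \<in> Basis" for b
      using Basis_le_norm[OF that, of w] w by (simp add: inner_commute)
    then have "\<bar>(z \<bullet> b) * (w \<bullet> b)\<bar> \<le> 1" if "b \<in> Basis - {e}" for b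
      using zb that by (simp add: abs_mult mult_le_one)
    then show ?thesis
      by (intro order_trans[OF sum_abs] sum_rest)
  qed
  ultimately have "\<bar>z \<bullet> e\<bar> * \<bar>w \<bullet> e\<bar> \<le> 1 + d"
    using zw by (simp add: abs_mult[symmetric])
  then have "\<bar>z \<bullet> e\<bar> * \<bar>w \<bullet> e\<bar> * d \<le> (1 + d) * d"
    using d1 by (intro mult_right_mono) auto
  moreover have "\<bar>z \<bullet> e\<bar> \<le> \<bar>z \<bullet> e\<bar> * \<bar>w \<bullet> e\<bar> * d"
    using e(2) mult_left_mono[of "1 / d" "\<bar>w \<bullet> e\<bar>" "\<bar>z \<bullet> e\<bar>"] d1 by (simp add: d_def divide_le_eq)
  ultimately have ze: "\<bar>z \<bullet> e\<bar> \<le> (1 + d) * d"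
    by linarith
  have "norm z \<le> \<bar>z \<bullet> e\<bar> + (\<Sum>b\<in>Basis - {e}. \<bar>z \<bullet> b\<bar>)"
    using norm_le_l1[of z] e(1) by (simp add: sum.remove)
  also have "\<dots> \<le> (1 + d) * d + d"
    using ze zb by (intro add_mono sum_rest) auto
  finally show ?thesis
    by (simp add: d_def algebra_simps)
qed

lemma slab_prism_sqnorm_le:
  fixes w x :: "'a::euclidean_space"
  assumes w: "norm w = 1" and e: "e \<in> Basis" "1 / real DIM('a) \<le> \<bar>w \<bullet> e\<bar>" and t: "1 \<le> t"
    and x: "t \<le> x \<bullet> w" "x \<bullet> w \<le> t + 1 / t" "\<forall>b\<in>Basis - {e}. \<bar>x \<bullet> b - (t *\<^sub>R w) \<bullet> b\<bar> \<le> 1"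
  shows "(norm x)\<^sup>2 \<le> t\<^sup>2 + prism_excess DIM('a)"
proof -
  define d where "d = real DIM('a)"
  define z where "z = x - t *\<^sub>R w"
  have ww: "w \<bullet> w = 1"
    using w by (simp add: power2_norm_eq_inner[symmetric])
  have zw: "z \<bullet> w = x \<bullet> w - t"
    unfolding z_def by (simp add: inner_diff_left ww)
  have "1 / t \<le> 1"
    using t by simp
  then have zw01: "0 \<le> z \<bullet> w" "z \<bullet> w \<le> 1"
    using x zw by linarith+
  have "norm z \<le> d * (d + 2)"
    unfolding d_def using zw01 x(3)
    by (intro norm_le_if_inner_bounded[OF w e]) (auto simp: z_def inner_diff_left)
  moreover have "x - (x \<bullet> w) *\<^sub>R w = z - (z \<bullet> w) *\<^sub>R w"
    unfolding zw unfolding z_def by (simp add: algebra_simps)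
  moreover have "norm ((z \<bullet> w) *\<^sub>R w) \<le> 1"
    using zw01 w by simp
  ultimately have "norm (x - (x \<bullet> w) *\<^sub>R w) \<le> d * (d + 2) + 1"
    using norm_triangle_ineq4[of z "(z \<bullet> w) *\<^sub>R w"] by simp
  then have "(norm (x - (x \<bullet> w) *\<^sub>R w))\<^sup>2 \<le> (d * (d + 2) + 1)\<^sup>2"
    by (intro power_mono) auto
  also have "(d * (d + 2) + 1)\<^sup>2 = (d + 1) ^ 4"
    by (simp add: power2_eq_square eval_nat_numeral algebra_simps)
  finally have perp: "(norm (x - (x \<bullet> w) *\<^sub>R w))\<^sup>2 \<le> (d + 1) ^ 4" .
  have "(x \<bullet> w)\<^sup>2 \<le> (t + 1 / t)\<^sup>2"
    using x t by (intro power_mono) auto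
  also have "(t + 1 / t)\<^sup>2 = t\<^sup>2 + 2 + 1 / t\<^sup>2"
    using t by (simp add: power2_eq_square field_simps)
  also have "1 / t\<^sup>2 \<le> 1"
    using t by (simp add: divide_le_eq one_le_power)
  finally have along: "(x \<bullet> w)\<^sup>2 \<le> t\<^sup>2 + 3"
    by simp
  have "orthogonal ((x \<bullet> w) *\<^sub>R w) (x - (x \<bullet> w) *\<^sub>R w)"
    by (simp add: orthogonal_def inner_diff_right ww inner_commute)
  then have "(norm x)\<^sup>2 = (x \<bullet> w)\<^sup>2 + (norm (x - (x \<bullet> w) *\<^sub>R w))\<^sup>2"
    using norm_add_Pythagorean[of "(x \<bullet> w) *\<^sub>R w" "x - (x \<bullet> w) *\<^sub>R w"] w by simp
  then show ?thesis
    using perp along by (simp add: prism_excess_def d_def)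
qed

lemma emeasure_std_gaussian_ge:
  fixes S :: "'a::euclidean_space set"
  assumes S: "S \<in> sets borel" and bound: "\<forall>x\<in>S. (norm x)\<^sup>2 \<le> M"
  shows "ennreal ((2 * pi) powr (- real DIM('a) / 2) * exp (- M / 2)) * emeasure lborel S
    \<le> emeasure std_gaussian S"
proof -
  let ?c = "(2 * pi) powr (- real DIM('a) / 2)"
  have "ennreal (?c * exp (- M / 2)) * emeasure lborel S
      = (\<integral>\<^sup>+x. ennreal (?c * exp (- M / 2)) * indicator S x \<partial>lborel)"
    using S by (simp add: nn_integral_cmult_indicator)
  also have "\<dots> \<le> (\<integral>\<^sup>+x. ennreal (?c * exp (- (norm x)\<^sup>2 / 2)) * indicator S x \<partial>lborel)"
    using bound by (intro nn_integral_mono) (auto simp: indicator_def intro!: ennreal_leI)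
  also have "\<dots> = emeasure std_gaussian S"
    using S unfolding std_gaussian_def by (simp add: emeasure_density)
  finally show ?thesis .
qed

text \<open>Shearing the prism along a coordinate \<open>e\<close> on which \<open>w\<close> is not small keeps its volume
  \<open>\<ge> 1/t\<close> while its points stay within \<open>O(1)\<close> of \<open>t * w\<close>; this gives the sharp factor
  \<open>exp (- t\<^sup>2 / 2) / t\<close>, with no loss of powers of \<open>t\<close>.\<close>
lemma std_gaussian_halfspace_cball_ge:
  fixes w :: "'a::euclidean_space"
  assumes w: "norm w = 1" and t: "1 \<le> t" and R: "t\<^sup>2 + prism_excess DIM('a) \<le> R\<^sup>2" "0 \<le> R"
  shows "halfspace_mass_const DIM('a) * exp (- t\<^sup>2 / 2) / t
    \<le> measure std_gaussian (cball 0 R \<inter> {x. t \<le> x \<bullet> w})"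
proof -
  define K where "K = prism_excess DIM('a)"
  obtain e where e: "e \<in> Basis" "1 / real DIM('a) \<le> \<bar>w \<bullet> e\<bar>"
    using exists_Basis_abs_inner_ge[OF w] by blast
  have we: "w \<bullet> e \<noteq> 0" "\<bar>w \<bullet> e\<bar> \<le> 1"
    using e Basis_le_norm[OF e(1), of w] w by (auto simp: inner_commute)
  define S where "S = {x::'a. t \<le> x \<bullet> w \<and> x \<bullet> w \<le> t + 1 / t \<and> (\<forall>b\<in>Basis-{e}. \<bar>x \<bullet> b - (t *\<^sub>R w) \<bullet> b\<bar> \<le> 1)}"
  have S_borel: "S \<in> sets borel"
    unfolding S_def by measurable
  have S_sqnorm: "\<forall>x\<in>S. (norm x)\<^sup>2 \<le> t\<^sup>2 + K"
  proof
    fix x assume "x \<in> S"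
    then show "(norm x)\<^sup>2 \<le> t\<^sup>2 + K"
      unfolding S_def K_def by (intro slab_prism_sqnorm_le[OF w e t]) simp_all
  qed
  have S_sub: "S \<subseteq> cball 0 R \<inter> {x. t \<le> x \<bullet> w}"
  proof (intro subsetI)
    fix x assume x: "x \<in> S"
    have "(norm x)\<^sup>2 \<le> R\<^sup>2"
      using S_sqnorm x R(1) unfolding K_def by fastforce
    then have "norm x \<le> R"
      using R(2) by (rule power2_le_imp_le)
    with x show "x \<in> cball 0 R \<inter> {x. t \<le> x \<bullet> w}"
      unfolding S_def by simp
  qed
  have vol: "ennreal (1 / t) \<le> emeasure lborel S"
    unfolding S_def using t by (intro emeasure_slab_prism_ge[OF e(1) we]) simp
  have "ennreal (halfspace_mass_const DIM('a) * exp (- t\<^sup>2 / 2) / t)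
      = ennreal ((2 * pi) powr (- real DIM('a) / 2) * exp (- (t\<^sup>2 + K) / 2)) * ennreal (1 / t)"
    using t by (simp add: halfspace_mass_const_def K_def ennreal_mult[symmetric] exp_add[symmetric]
        add_divide_distrib)
  also have "\<dots> \<le> ennreal ((2 * pi) powr (- real DIM('a) / 2) * exp (- (t\<^sup>2 + K) / 2)) * emeasure lborel S"
    using vol by (rule mult_left_mono) simp
  also have "\<dots> \<le> emeasure std_gaussian S"
    by (rule emeasure_std_gaussian_ge[OF S_borel S_sqnorm])
  also have "\<dots> \<le> emeasure std_gaussian (cball 0 R \<inter> {x. t \<le> x \<bullet> w})"
    using S_sub by (intro emeasure_mono) auto
  finally show ?thesis
    by (simp add: std_gaussian.emeasure_eq_measure)
qed

lemma cond_gaussian_halfspace_ge: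
  fixes w :: "'a::euclidean_space"
  assumes w: "norm w = 1" and t: "1 \<le> t" and R: "t\<^sup>2 + prism_excess DIM('a) \<le> R\<^sup>2" "0 \<le> R"
  shows "emeasure std_gaussian (cball 0 R :: 'a set) \<noteq> 0"
    and "halfspace_mass_const DIM('a) * exp (- t\<^sup>2 / 2) / t \<le> measure (cond_gaussian R :: 'a measure) {x. t \<le> x \<bullet> w}"
proof -
  note lower = std_gaussian_halfspace_cball_ge[OF w t R]
  have "0 < measure std_gaussian (cball 0 R \<inter> {x. t \<le> x \<bullet> w})"
    using t halfspace_mass_const_pos by (intro less_le_trans[OF _ lower]) simp
  also have "\<dots> \<le> measure std_gaussian (cball 0 R :: 'a set)"
    by (intro std_gaussian.finite_measure_mono) auto
  finally show pos: "emeasure std_gaussian (cball 0 R :: 'a set) \<noteq> 0"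
    by (simp add: std_gaussian.emeasure_eq_measure)
  show "halfspace_mass_const DIM('a) * exp (- t\<^sup>2 / 2) / t \<le> measure (cond_gaussian R :: 'a measure) {x. t \<le> x \<bullet> w}"
    using lower measure_cond_gaussian_ge[OF pos, of "{x. t \<le> x \<bullet> w}"] by simp
qed

section \<open>Nets of the unit sphere\<close>

lemma norm_sub_sgn_le:
  fixes u g :: "'a::real_normed_vector"
  assumes u: "norm u = 1"
  shows "norm (u - sgn g) \<le> 2 * norm (u - g)"
proof (cases "g = 0")
  case True
  then show ?thesis
    using u by simp
next
  case False
  have "(1 - 1 / norm g) * norm g = norm g - 1"
    using False by (simp add: field_simps)
  moreover have "g - sgn g = (1 - 1 / norm g) *\<^sub>R g"
    by (simp add: sgn_div_norm algebra_simps divide_inverse)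
  ultimately have "norm (g - sgn g) = \<bar>norm g - 1\<bar>"
    by (metis abs_mult abs_norm_cancel norm_scaleR)
  also have "\<dots> \<le> norm (u - g)"
    using norm_triangle_ineq3[of g u] u by (simp add: norm_minus_commute)
  finally show ?thesis
    using norm_triangle_ineq[of "u - g" "g - sgn g"] by simp
qed

definition grid_point :: "real \<Rightarrow> ('a \<Rightarrow> int) \<Rightarrow> 'a::euclidean_space" where
  "grid_point h k = (\<Sum>b\<in>Basis. (h * of_int (k b)) *\<^sub>R b)"

lemma exists_grid_point_near:
  fixes u :: "'a::euclidean_space" and h :: real
  assumes h: "0 < h" and u: "norm u \<le> 1"
  obtains k where "k \<in> Basis \<rightarrow>\<^sub>E {-\<lceil>1 / h\<rceil>..\<lceil>1 / h\<rceil>}" "norm (u - grid_point h k) \<le> real DIM('a) * h"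
proof
  define k where "k = restrict (\<lambda>b. \<lfloor>(u \<bullet> b) / h\<rfloor>) Basis"
  have ub: "\<bar>u \<bullet> b\<bar> \<le> 1" if "b \<in> Basis" for b
    using Basis_le_norm[OF that, of u] u by (simp add: inner_commute)
  show "k \<in> Basis \<rightarrow>\<^sub>E {-\<lceil>1 / h\<rceil>..\<lceil>1 / h\<rceil>}"
  proof -
    have "\<lfloor>(u \<bullet> b) / h\<rfloor> \<in> {-\<lceil>1 / h\<rceil>..\<lceil>1 / h\<rceil>}" if "b \<in> Basis" for b
    proof -
      have "- (1 / h) \<le> (u \<bullet> b) / h" "(u \<bullet> b) / h \<le> 1 / h"
        using ub[OF that] h by (auto simp: divide_le_eq le_divide_eq abs_le_iff)
      then show ?thesis
        by (simp add: ceiling_def floor_mono le_floor_iff floor_le_iff) linarith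
    qed
    then show ?thesis
      by (simp add: k_def)
  qed
  have "\<bar>(u - grid_point h k) \<bullet> b\<bar> \<le> h" if b: "b \<in> Basis" for b
  proof -
    have "h * of_int \<lfloor>(u \<bullet> b) / h\<rfloor> \<le> u \<bullet> b" "u \<bullet> b < h * of_int \<lfloor>(u \<bullet> b) / h\<rfloor> + h"
      using h floor_correct[of "(u \<bullet> b) / h"] by (auto simp: le_divide_eq divide_less_eq algebra_simps)
    then show ?thesis
      using b by (simp add: grid_point_def k_def inner_diff_left
          inner_sum_Basis_scaleR[where f = "\<lambda>b. h * of_int (k b)", unfolded k_def])
  qed
  then have "norm (u - grid_point h k) \<le> (\<Sum>b\<in>(Basis::'a set). h)"
    by (intro order_trans[OF norm_le_l1] sum_mono)
  then show "norm (u - grid_point h k) \<le> real DIM('a) * h"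
    by simp
qed

lemma card_grid_le:
  fixes h :: real
  assumes "0 < h"
  shows "real (card (Basis \<rightarrow>\<^sub>E {-\<lceil>1 / h\<rceil>..\<lceil>1 / h\<rceil>} :: ('a::euclidean_space \<Rightarrow> int) set))
    \<le> (2 / h + 3) ^ DIM('a)"
proof -
  have "0 < 1 / h"
    using assms by simp
  then have "0 \<le> \<lceil>1 / h\<rceil>" "of_int \<lceil>1 / h\<rceil> \<le> 1 / h + 1"
    by linarith+
  then have "real (nat (2 * \<lceil>1 / h\<rceil> + 1)) \<le> 2 * (1 / h) + 3"
    by linarith
  then show ?thesis
    by (simp add: card_PiE power_mono)
qed

lemma sphere_net:
  fixes \<delta> :: real
  assumes \<delta>: "0 < \<delta>" "\<delta> \<le> 1"
  obtains N :: "'a::euclidean_space set" where "finite N" "\<And>w. w \<in> N \<Longrightarrow> norm w = 1"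
    "\<And>u. norm u = 1 \<Longrightarrow> \<exists>w\<in>N. norm (u - w) \<le> \<delta>"
    "real (card N) \<le> (4 * real DIM('a) / \<delta> + 3) ^ DIM('a)"
proof -
  define d where "d = real DIM('a)"
  have d1: "1 \<le> d"
    unfolding d_def using DIM_positive[where 'a='a] by linarith
  define h where "h = \<delta> / (2 * d)"
  have h: "0 < h" "d * h = \<delta> / 2"
    unfolding h_def using \<delta> d1 by auto
  define M where "M = \<lceil>1 / h\<rceil>"
  define K where "K = (Basis::'a set) \<rightarrow>\<^sub>E {-M..M}"
  define N where "N = sgn ` (grid_point h ` K - {0})"
  have fK: "finite K"
    unfolding K_def by (intro finite_PiE) auto
  have "real (card N) \<le> real (card K)"
    unfolding N_def using fK by (intro of_nat_mono order_trans[OF card_image_le card_image_le]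
        order_trans[OF card_mono card_image_le]) auto
  also have "\<dots> \<le> (2 / h + 3) ^ DIM('a)"
    using card_grid_le[OF h(1)] by (simp add: K_def M_def)
  also have "2 / h = 4 * real DIM('a) / \<delta>"
    by (simp add: h_def d_def)
  finally have card_N: "real (card N) \<le> (4 * real DIM('a) / \<delta> + 3) ^ DIM('a)" .
  have norm_N: "norm w = 1" if w: "w \<in> N" for w
  proof -
    obtain g where "g \<noteq> 0" "w = sgn g"
      using w unfolding N_def by auto
    then show ?thesis
      by (simp add: norm_sgn)
  qed
  have cover_N: "\<exists>w\<in>N. norm (u - w) \<le> \<delta>" if u: "norm u = 1" for u
  proof -
    obtain k where k: "k \<in> K" and near: "norm (u - grid_point h k) \<le> \<delta> / 2"
      using exists_grid_point_near[OF h(1), of u] u h(2) unfolding K_def M_def d_def by auto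
    define g where "g = grid_point h k"
    have "g \<noteq> 0"
      using near \<delta> u unfolding g_def by auto
    then have "sgn g \<in> N"
      using k unfolding N_def g_def by auto
    moreover have "norm (u - sgn g) \<le> \<delta>"
      using norm_sub_sgn_le[OF u, of g] near unfolding g_def by simp
    ultimately show ?thesis
      by blast
  qed
  show thesis
    using that[OF _ norm_N cover_N card_N] fK unfolding N_def by simp
qed

section \<open>Balls inside convex hulls\<close>

text \<open>A point of \<open>cball 0 r\<close> outside the hull is separated from it by an open set of directions,
  which contains a direction of the dense set \<open>D\<close>.\<close>
lemma cball_subset_convex_hull_if_dense_support:
  fixes P D :: "'a::euclidean_space set"
  assumes P: "finite P" and D: "\<And>U. open U \<Longrightarrow> U \<noteq> {} \<Longrightarrow> \<exists>d\<in>D. d \<in> U"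
    and support: "\<forall>u\<in>D. \<exists>p\<in>P. r * norm u \<le> u \<bullet> p"
  shows "cball 0 r \<subseteq> convex hull P"
proof
  fix y :: 'a assume y: "y \<in> cball 0 r"
  show "y \<in> convex hull P"
  proof (rule ccontr)
    assume "y \<notin> convex hull P"
    moreover have "closed (convex hull P)"
      by (rule compact_imp_closed[OF finite_imp_compact_convex_hull[OF P]])
    ultimately obtain a b where ab: "a \<bullet> y < b" "\<forall>x\<in>convex hull P. b < a \<bullet> x"
      using separating_hyperplane_closed_point[OF convex_convex_hull] by blast
    define U where "U = (\<Inter>p\<in>P. {u. (p - y) \<bullet> u < 0})"
    have "open U"
      unfolding U_def using P by (intro open_INT) (auto intro: open_halfspace_lt)
    moreover have "- a \<in> U"
    proof -
      have "(p - y) \<bullet> (- a) < 0" if "p \<in> P" for p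
      proof -
        have "b < a \<bullet> p"
          using ab(2) hull_inc[OF that] by blast
        then show ?thesis
          using ab(1) by (simp add: inner_diff_left inner_diff_right inner_commute)
      qed
      then show ?thesis
        unfolding U_def by auto
    qed
    ultimately obtain d where d: "d \<in> D" "d \<in> U"
      using D by blast
    obtain p where p: "p \<in> P" "r * norm d \<le> d \<bullet> p"
      using support d(1) by blast
    have "(p - y) \<bullet> d < 0"
      using d(2) p(1) unfolding U_def by blast
    then have "d \<bullet> p < d \<bullet> y"
      by (simp add: inner_diff_left inner_diff_right inner_commute)
    also have "\<dots> \<le> norm d * norm y"
      by (rule norm_cauchy_schwarz)
    also have "\<dots> \<le> norm d * r"
      using y by (intro mult_left_mono) auto
    finally show False
      using p(2) by (simp add: mult.commute)
  qed
qed

lemma support_ge_if_cball_subset_convex_hull: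
  fixes P :: "'a::euclidean_space set"
  assumes P: "finite P" "P \<noteq> {}" and r: "0 \<le> r" and sub: "cball 0 r \<subseteq> convex hull P"
  shows "\<exists>p\<in>P. r * norm u \<le> u \<bullet> p"
proof (cases "u = 0")
  case True
  then show ?thesis
    using P by auto
next
  case False
  define m where "m = Max ((\<lambda>p. u \<bullet> p) ` P)"
  have "m \<in> (\<lambda>p. u \<bullet> p) ` P"
    unfolding m_def using P by (intro Max_in) auto
  then obtain p where p: "p \<in> P" "u \<bullet> p = m"
    by auto
  have "convex hull P \<subseteq> {x. u \<bullet> x \<le> m}"
    by (rule hull_minimal) (use P in \<open>auto simp: m_def convex_halfspace_le\<close>)
  moreover have "(r / norm u) *\<^sub>R u \<in> cball 0 r"
    using r False by simp
  ultimately have "u \<bullet> ((r / norm u) *\<^sub>R u) \<le> m"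
    using sub by blast
  moreover have "u \<bullet> ((r / norm u) *\<^sub>R u) = r * norm u"
    using False by (simp add: power2_norm_eq_inner[symmetric] power2_eq_square)
  ultimately show ?thesis
    using p by auto
qed

text \<open>A unit vector \<open>u\<close> with \<open>norm (u - w) \<le> \<delta>\<close> loses at most \<open>R * \<delta>\<close> against \<open>w\<close> on points
  of norm at most \<open>R\<close>.\<close>
lemma cball_subset_convex_hull_if_net_hit:
  fixes P N :: "'a::euclidean_space set"
  assumes P: "finite P" "P \<noteq> {}" "\<forall>x\<in>P. norm x \<le> R"
    and N: "\<And>u. norm u = 1 \<Longrightarrow> \<exists>w\<in>N. norm (u - w) \<le> \<delta>"
    and hit: "\<forall>w\<in>N. \<exists>x\<in>P. t \<le> x \<bullet> w"
    and r: "r \<le> t - R * \<delta>" and \<delta>: "0 \<le> \<delta>"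
  shows "cball 0 r \<subseteq> convex hull P"
proof (rule cball_subset_convex_hull_if_dense_support[OF P(1), where D = UNIV], blast, intro ballI)
  fix u :: 'a
  show "\<exists>x\<in>P. r * norm u \<le> u \<bullet> x"
  proof (cases "u = 0")
    case True
    then show ?thesis
      using P(2) by auto
  next
    case False
    obtain w where w: "w \<in> N" "norm (sgn u - w) \<le> \<delta>"
      using N[of "sgn u"] False by (auto simp: norm_sgn)
    obtain x where x: "x \<in> P" "t \<le> x \<bullet> w"
      using hit w(1) by blast
    have "\<bar>(sgn u - w) \<bullet> x\<bar> \<le> R * \<delta>"
      using Cauchy_Schwarz_ineq2[of "sgn u - w" x] mult_mono[OF w(2) P(3)[rule_format, OF x(1)]] \<delta>
      by (simp add: mult.commute)
    then have "r \<le> sgn u \<bullet> x"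
      using x(2) r by (simp add: inner_diff_left inner_diff_right inner_commute abs_le_iff)
    then have "r * norm u \<le> (sgn u \<bullet> x) * norm u"
      by (intro mult_right_mono) auto
    also have "(sgn u \<bullet> x) * norm u = u \<bullet> x"
      using False by (simp add: sgn_div_norm)
    finally show ?thesis
      using x(1) by blast
  qed
qed

section \<open>Random points\<close>

lemma space_sample_law: "space (sample_law n R :: (nat \<Rightarrow> 'a::euclidean_space) measure) = {..<n} \<rightarrow>\<^sub>E UNIV"
  by (simp add: sample_law_def space_PiM)

lemma sets_sample_law_PiE:
  assumes "B \<in> sets borel"
  shows "{..<n} \<rightarrow>\<^sub>E B \<in> sets (sample_law n R :: (nat \<Rightarrow> 'a::euclidean_space) measure)"
  unfolding sample_law_def using assms by (intro sets_PiM_I_finite) auto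

lemma measurable_sample_law_component:
  assumes "i < n"
  shows "(\<lambda>X. X i) \<in> measurable (sample_law n R :: (nat \<Rightarrow> 'a::euclidean_space) measure) borel"
  unfolding sample_law_def using assms
  by (metis lessThan_iff measurable_component_singleton sets_cond_gaussian measurable_cong_sets)

text \<open>The event is a countable intersection, over a dense set of directions \<open>u\<close>, of finite unions
  of half-spaces \<open>r * norm u \<le> u \<bullet> X i\<close>.\<close>
lemma sets_sample_law_cball_subset_hull:
  fixes R r :: real
  assumes n: "0 < n" and r: "0 \<le> r"
  shows "{X \<in> space (sample_law n R). cball 0 r \<subseteq> convex hull (X ` {..<n})}
    \<in> sets (sample_law n R :: (nat \<Rightarrow> 'a::euclidean_space) measure)"
proof -
  let ?P = "sample_law n R :: (nat \<Rightarrow> 'a) measure"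
  obtain D :: "'a set" where D: "countable D" "\<And>U. open U \<Longrightarrow> U \<noteq> {} \<Longrightarrow> \<exists>d\<in>D. d \<in> U"
    by (erule countable_dense_setE)
  have "D \<noteq> {}"
    using D(2)[of UNIV] by auto
  have "{X \<in> space ?P. cball 0 r \<subseteq> convex hull (X ` {..<n})} =
      (\<Inter>u\<in>D. \<Union>i\<in>{..<n}. {X \<in> space ?P. r * norm u \<le> u \<bullet> X i})"
  proof (intro equalityI subsetI)
    fix X assume "X \<in> {X \<in> space ?P. cball 0 r \<subseteq> convex hull (X ` {..<n})}"
    then show "X \<in> (\<Inter>u\<in>D. \<Union>i\<in>{..<n}. {X \<in> space ?P. r * norm u \<le> u \<bullet> X i})"
      using support_ge_if_cball_subset_convex_hull[of "X ` {..<n}" r] n r by auto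
  next
    fix X assume X: "X \<in> (\<Inter>u\<in>D. \<Union>i\<in>{..<n}. {X \<in> space ?P. r * norm u \<le> u \<bullet> X i})"
    then have "cball 0 r \<subseteq> convex hull (X ` {..<n})"
      by (intro cball_subset_convex_hull_if_dense_support[OF _ D(2)]) auto
    then show "X \<in> {X \<in> space ?P. cball 0 r \<subseteq> convex hull (X ` {..<n})}"
      using X \<open>D \<noteq> {}\<close> by auto
  qed
  also have "\<dots> \<in> sets ?P"
  proof -
    have "{X \<in> space ?P. r * norm u \<le> u \<bullet> X i} \<in> sets ?P" if "i \<in> {..<n}" for u i
    proof -
      have [measurable]: "(\<lambda>X. X i) \<in> measurable ?P borel"
        using that by (simp add: measurable_sample_law_component)
      show ?thesis
        by measurable
    qed
    then show ?thesis
      by (intro sets.countable_INT' D(1) \<open>D \<noteq> {}\<close> sets.finite_UN) auto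
  qed
  finally show ?thesis .
qed

context
  fixes R :: real
  assumes cball_nonnull: "emeasure std_gaussian (cball 0 R :: 'a::euclidean_space set) \<noteq> 0"
begin

interpretation cond: prob_space "cond_gaussian R :: 'a measure"
  by (rule prob_space_cond_gaussian[OF cball_nonnull])

lemma prob_space_sample_law: "prob_space (sample_law n R :: (nat \<Rightarrow> 'a) measure)"
  unfolding sample_law_def by (intro prob_space_PiM cond.prob_space_axioms)

lemma measure_sample_law_PiE:
  assumes "A \<in> sets borel"
  shows "measure (sample_law n R :: (nat \<Rightarrow> 'a) measure) ({..<n} \<rightarrow>\<^sub>E A) = measure (cond_gaussian R) A ^ n"
proof -
  interpret product: finite_product_prob_space "\<lambda>_. cond_gaussian R :: 'a measure" "{..<n}"
    by unfold_locales auto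
  show ?thesis
    unfolding sample_law_def using assms by (subst product.prob_times) auto
qed

lemma measure_sample_law_all_outside:
  assumes "H \<in> sets borel" and q: "q \<le> measure (cond_gaussian R) H"
  shows "measure (sample_law n R :: (nat \<Rightarrow> 'a) measure) ({..<n} \<rightarrow>\<^sub>E - H) \<le> exp (- q * n)"
proof -
  let ?p = "measure (cond_gaussian R :: 'a measure) H"
  have "measure (cond_gaussian R :: 'a measure) (- H) = 1 - ?p"
    using cond.prob_compl[of H] assms by (simp add: Compl_eq_Diff_UNIV)
  then have "measure (sample_law n R :: (nat \<Rightarrow> 'a) measure) ({..<n} \<rightarrow>\<^sub>E - H) = (1 - ?p) ^ n"
    using measure_sample_law_PiE[of "- H" n] assms by (simp add: borel_comp)
  also have "\<dots> \<le> exp (- ?p) ^ n"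
    using exp_ge_add_one_self[of "- ?p"] cond.prob_le_1[of H] by (intro power_mono) auto
  also have "\<dots> = exp (- ?p * n)"
    by (simp add: exp_of_nat_mult[symmetric] mult.commute)
  also have "\<dots> \<le> exp (- q * n)"
    using q by (simp add: mult_right_mono)
  finally show ?thesis .
qed

lemma measure_sample_law_outside_cball:
  "measure (sample_law n R :: (nat \<Rightarrow> 'a) measure) (space (sample_law n R) - ({..<n} \<rightarrow>\<^sub>E cball 0 R)) = 0"
proof -
  interpret sample: prob_space "sample_law n R :: (nat \<Rightarrow> 'a) measure"
    by (rule prob_space_sample_law)
  have "{..<n} \<rightarrow>\<^sub>E cball 0 R \<in> sets (sample_law n R :: (nat \<Rightarrow> 'a) measure)"
    by (rule sets_sample_law_PiE) simp
  from sample.prob_compl[OF this] show ?thesis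
    using measure_sample_law_PiE[of "cball 0 R" n]
    by (simp add: measure_cond_gaussian_cball[OF cball_nonnull])
qed

text \<open>Outside the null event that some point leaves \<open>cball 0 R\<close>, a failure means that some
  \<open>w \<in> N\<close> is missed by all points.\<close>
lemma measure_sample_law_cball_subset_hull_ge_net:
  fixes N :: "'a set"
  assumes N: "finite N" "\<And>u. norm u = 1 \<Longrightarrow> \<exists>w\<in>N. norm (u - w) \<le> \<delta>"
    and n: "0 < n" and r: "0 \<le> r" "r \<le> t - R * \<delta>" and \<delta>: "0 \<le> \<delta>"
    and q: "\<And>w. w \<in> N \<Longrightarrow> q \<le> measure (cond_gaussian R) {x. t \<le> x \<bullet> w}"
  shows "1 - real (card N) * exp (- q * n)
    \<le> measure (sample_law n R :: (nat \<Rightarrow> 'a) measure)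
        {X \<in> space (sample_law n R). cball 0 r \<subseteq> convex hull (X ` {..<n})}"
proof -
  let ?P = "sample_law n R :: (nat \<Rightarrow> 'a) measure"
  interpret sample: prob_space ?P
    by (rule prob_space_sample_law)
  define A where "A = {X \<in> space ?P. cball 0 r \<subseteq> convex hull (X ` {..<n})}"
  define Out where "Out = space ?P - ({..<n} \<rightarrow>\<^sub>E cball 0 R)"
  define Miss where "Miss w = {..<n} \<rightarrow>\<^sub>E - {x. t \<le> x \<bullet> w}" for w :: 'a
  have A: "A \<in> sets ?P"
    unfolding A_def using n r(1) by (rule sets_sample_law_cball_subset_hull)
  have Out: "Out \<in> sets ?P"
    unfolding Out_def by (intro sets.compl_sets sets_sample_law_PiE) simp
  have Miss: "Miss w \<in> sets ?P" for w
    unfolding Miss_def by (intro sets_sample_law_PiE borel_comp) simp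
  have "space ?P - A \<subseteq> Out \<union> (\<Union>w\<in>N. Miss w)"
  proof
    fix X assume X: "X \<in> space ?P - A"
    show "X \<in> Out \<union> (\<Union>w\<in>N. Miss w)"
    proof (rule ccontr)
      assume "X \<notin> Out \<union> (\<Union>w\<in>N. Miss w)"
      then have "\<forall>x\<in>X ` {..<n}. norm x \<le> R" "\<forall>w\<in>N. \<exists>x\<in>X ` {..<n}. t \<le> x \<bullet> w"
        using X by (auto simp: Out_def Miss_def space_sample_law PiE_iff not_less)
      then have "cball 0 r \<subseteq> convex hull (X ` {..<n})"
        using n by (intro cball_subset_convex_hull_if_net_hit[OF _ _ _ N(2) _ r(2) \<delta>]) auto
      then show False
        using X unfolding A_def by blast
    qed
  qed
  then have "measure ?P (space ?P - A) \<le> measure ?P (Out \<union> (\<Union>w\<in>N. Miss w))"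
    using Out Miss N(1) by (intro sample.finite_measure_mono) auto
  also have "\<dots> \<le> measure ?P Out + (\<Sum>w\<in>N. measure ?P (Miss w))"
    using Out Miss N(1)
    by (intro order_trans[OF measure_Un_le] add_left_mono sample.finite_measure_subadditive_finite) auto
  also have "measure ?P Out = 0"
    unfolding Out_def by (rule measure_sample_law_outside_cball)
  also have "(\<Sum>w\<in>N. measure ?P (Miss w)) \<le> (\<Sum>w\<in>N. exp (- q * n))"
    unfolding Miss_def using q by (intro sum_mono measure_sample_law_all_outside) auto
  finally show ?thesis
    using sample.prob_compl[OF A] by (simp add: A_def)
qed

end

lemma measure_sample_law_cball_subset_hull_ge:
  fixes t R \<delta> r :: real
  assumes n: "0 < n" and t: "1 \<le> t" and R: "t\<^sup>2 + prism_excess DIM('a) \<le> R\<^sup>2" "0 \<le> R"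
    and \<delta>: "0 < \<delta>" "\<delta> \<le> 1" and r: "0 \<le> r" "r \<le> t - R * \<delta>"
  shows "1 - (4 * real DIM('a) / \<delta> + 3) ^ DIM('a) * exp (- (halfspace_mass_const DIM('a) * exp (- t\<^sup>2 / 2) / t) * n)
    \<le> measure (sample_law n R :: (nat \<Rightarrow> 'a::euclidean_space) measure)
        {X \<in> space (sample_law n R). cball 0 r \<subseteq> convex hull (X ` {..<n})}"
proof -
  let ?q = "halfspace_mass_const DIM('a) * exp (- t\<^sup>2 / 2) / t"
  obtain N :: "'a set" where N: "finite N" "\<And>w. w \<in> N \<Longrightarrow> norm w = 1"
      "\<And>u. norm u = 1 \<Longrightarrow> \<exists>w\<in>N. norm (u - w) \<le> \<delta>"
    and card_N: "real (card N) \<le> (4 * real DIM('a) / \<delta> + 3) ^ DIM('a)"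
    using sphere_net[OF \<delta>] by blast
  obtain b :: 'a where "b \<in> Basis"
    using nonempty_Basis by blast
  then have pos: "emeasure std_gaussian (cball 0 R :: 'a set) \<noteq> 0"
    by (intro cond_gaussian_halfspace_ge(1)[of b, OF _ t R]) simp
  have "1 - (4 * real DIM('a) / \<delta> + 3) ^ DIM('a) * exp (- ?q * n) \<le> 1 - real (card N) * exp (- ?q * n)"
    using card_N by (intro diff_left_mono mult_right_mono) auto
  also have "\<dots> \<le> measure (sample_law n R :: (nat \<Rightarrow> 'a) measure)
        {X \<in> space (sample_law n R). cball 0 r \<subseteq> convex hull (X ` {..<n})}"
    using \<delta> cond_gaussian_halfspace_ge(2)[OF N(2) t R]
    by (intro measure_sample_law_cball_subset_hull_ge_net[OF pos N(1,3) n r]) auto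
  finally show ?thesis .
qed

section \<open>Choice of parameters\<close>

lemma ln_pos_if_ln_ln_pos:
  assumes "0 < ln (ln (real n))"
  shows "0 < ln (real n)"
proof -
  have "0 \<le> ln (real n)"
    by (cases n) auto
  with assms show ?thesis
    by (cases "ln (real n) = 0") auto
qed

lemma n_mul_gaussian_tail_ge:
  fixes n :: nat and c t \<rho> :: real
  assumes c: "0 < c" "1 \<le> c * ln (ln n)"
    and \<rho>: "\<rho>\<^sup>2 = 2 * ln n - ln (ln n) - 2 * ln (c * ln (ln n))" and t: "0 < t" "t \<le> \<rho>"
  shows "c * ln (ln n) / 2 \<le> n * exp (- t\<^sup>2 / 2) / t"
proof -
  define L where "L = ln (real n)"
  define l where "l = ln L"
  have "0 < c * l"
    using c unfolding l_def L_def by simp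
  with c have l: "0 < l"
    by (simp add: zero_less_mult_iff)
  then have L: "0 < L"
    using ln_pos_if_ln_ln_pos unfolding l_def L_def by blast
  then have "0 < n"
    unfolding L_def by (cases n) auto
  have ln_cl: "0 \<le> ln (c * l)"
    using c unfolding l_def L_def by simp
  have \<rho>2: "\<rho>\<^sup>2 = 2 * L - l - 2 * ln (c * l)"
    using \<rho> unfolding l_def L_def .
  have \<rho>_le: "\<rho> \<le> sqrt 2 * sqrt L"
    using \<rho>2 l ln_cl t by (simp add: real_sqrt_mult[symmetric] real_le_rsqrt)
  have "n * exp (- \<rho>\<^sup>2 / 2) = n * (exp (- L) * exp (l / 2) * exp (ln (c * l)))"
    by (simp add: \<rho>2 exp_add[symmetric] exp_diff[symmetric] field_simps)
  also have "\<dots> = sqrt L * (c * l)"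
    using \<open>0 < n\<close> L c l
    by (simp add: L_def l_def exp_minus exp_divide_power_eq powr_half_sqrt[symmetric] powr_def)
  finally have tail_\<rho>: "n * exp (- \<rho>\<^sup>2 / 2) = sqrt L * (c * l)" .
  have "c * l / 2 \<le> c * l / sqrt 2"
    using c l sqrt2_less_2 by (intro divide_left_mono) auto
  also have "\<dots> = sqrt L * (c * l) / (sqrt 2 * sqrt L)"
    using L by simp
  also have "\<dots> \<le> n * exp (- \<rho>\<^sup>2 / 2) / \<rho>"
    unfolding tail_\<rho> using \<rho>_le t L c l by (intro divide_left_mono) auto
  also have "\<dots> \<le> n * exp (- t\<^sup>2 / 2) / t"
    using t by (intro frac_le mult_left_mono power_mono) auto
  finally show ?thesis
    by (simp add: l_def L_def)
qed

lemma net_size_le_powr: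
  fixes L x :: real and d :: nat
  assumes d: "1 \<le> d" and x: "0 \<le> x" "x \<le> 3 * d * L" and L: "(4 * real d) ^ d \<le> L"
  shows "(x + 3) ^ d \<le> L powr (d + 1)"
proof -
  have "4 * real d \<le> (4 * real d) ^ d"
    using d by (intro self_le_power) auto
  then have L4: "4 \<le> L"
    using L d by linarith
  have "1 * L \<le> real d * L"
    using d L4 by (intro mult_right_mono) auto
  then have "x + 3 \<le> 4 * d * L"
    using x L4 by linarith
  then have "(x + 3) ^ d \<le> (4 * d * L) ^ d"
    using x by (intro power_mono) auto
  also have "\<dots> = (4 * real d) ^ d * L ^ d"
    by (simp add: power_mult_distrib)
  also have "\<dots> \<le> L * L ^ d"
    using L L4 by (intro mult_right_mono) auto
  also have "\<dots> = L powr (d + 1)"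
    using L4 by (simp add: powr_add powr_realpow)
  finally show ?thesis .
qed

lemma exp_neg_halfspace_mass_le:
  fixes n d :: nat and c C t \<rho> :: real
  assumes c: "0 < c" "(C + d + 1) * 2 \<le> halfspace_mass_const d * c" "1 \<le> c * ln (ln n)"
    and \<rho>: "\<rho>\<^sup>2 = 2 * ln n - ln (ln n) - 2 * ln (c * ln (ln n))" and t: "0 < t" "t \<le> \<rho>"
  shows "exp (- (halfspace_mass_const d * exp (- t\<^sup>2 / 2) / t) * n) \<le> ln n powr (- (C + d + 1))"
proof -
  have "0 < c * ln (ln n)"
    using c(3) by simp
  with c(1) have "0 < ln (ln n)"
    by (simp add: zero_less_mult_iff)
  then have "0 < ln n"
    by (rule ln_pos_if_ln_ln_pos)
  have "(C + d + 1) * ln (ln n) \<le> halfspace_mass_const d * (c * ln (ln n) / 2)"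
    using c(2) \<open>0 < ln (ln n)\<close> by (simp add: mult_right_mono)
  also have "\<dots> \<le> halfspace_mass_const d * (n * exp (- t\<^sup>2 / 2) / t)"
    using n_mul_gaussian_tail_ge[OF c(1,3) \<rho> t] halfspace_mass_const_pos[of d]
    by (intro mult_left_mono) simp_all
  also have "\<dots> = halfspace_mass_const d * exp (- t\<^sup>2 / 2) / t * n"
    by (simp add: ac_simps)
  finally have "- (halfspace_mass_const d * exp (- t\<^sup>2 / 2) / t) * n \<le> - (C + d + 1) * ln (ln n)"
    by (simp only: mult_minus_left)
  then show ?thesis
    using \<open>0 < ln n\<close> by (simp add: powr_def)
qed

lemma loglog_radii_bounds:
  fixes L l c c0 K :: real
  defines "R \<equiv> sqrt (2 * L + c0 * l)" and "\<rho> \<equiv> sqrt (2 * L - l - 2 * ln (c * l))"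
  assumes l: "0 < l" and L: "0 < L" and cl: "1 \<le> c * l" and c0: "0 \<le> c0"
    and large: "25 \<le> 2 * L - l - 2 * ln (c * l)" "K \<le> l" "c0 * l \<le> L"
  shows "\<rho>\<^sup>2 = 2 * L - l - 2 * ln (c * l)" and "5 \<le> \<rho>" and "0 \<le> R" and "\<rho> \<le> R"
    and "R * \<rho> \<le> 3 * L" and "(\<rho> - 1 / \<rho>)\<^sup>2 + K \<le> R\<^sup>2"
proof -
  have ln_cl: "0 \<le> ln (c * l)" and c0l: "0 \<le> c0 * l"
    using cl c0 l by simp_all
  show \<rho>2: "\<rho>\<^sup>2 = 2 * L - l - 2 * ln (c * l)"
    using large(1) unfolding \<rho>_def by simp
  have R2: "R\<^sup>2 = 2 * L + c0 * l"
    using L c0l unfolding R_def by simp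
  show \<rho>5: "5 \<le> \<rho>"
    using large(1) unfolding \<rho>_def by (simp add: real_le_rsqrt)
  show R0: "0 \<le> R"
    using L c0l unfolding R_def by simp
  have "\<rho>\<^sup>2 \<le> R\<^sup>2"
    using \<rho>2 R2 l ln_cl c0l by linarith
  then show "\<rho> \<le> R"
    using R0 by (rule power2_le_imp_le)
  have "R\<^sup>2 \<le> 3 * L" "\<rho>\<^sup>2 \<le> 2 * L"
    using R2 \<rho>2 large(3) l ln_cl by linarith+
  then have "(R * \<rho>)\<^sup>2 \<le> (3 * L) * (2 * L)"
    unfolding power_mult_distrib using L by (intro mult_mono) auto
  also have "\<dots> \<le> (3 * L)\<^sup>2"
    unfolding power2_eq_square using L by (intro mult_left_mono) auto
  finally show "R * \<rho> \<le> 3 * L"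
    by (rule power2_le_imp_le) (use L in simp)
  have "0 < 1 / \<rho>" "1 / \<rho> \<le> 1"
    using \<rho>5 by simp_all
  then have "0 \<le> \<rho> - 1 / \<rho>" "\<rho> - 1 / \<rho> \<le> \<rho>"
    using \<rho>5 by linarith+
  then have "(\<rho> - 1 / \<rho>)\<^sup>2 \<le> \<rho>\<^sup>2"
    by (intro power_mono)
  then show "(\<rho> - 1 / \<rho>)\<^sup>2 + K \<le> R\<^sup>2"
    using \<rho>2 R2 ln_cl c0l large(2) by linarith
qed

lemma measure_sample_law_cball_subset_hull_ge_loglog:
  fixes n :: nat and c c0 C :: real
  defines "L \<equiv> ln (real n)" and "l \<equiv> ln (ln (real n))"
  defines "R \<equiv> sqrt (2 * L + c0 * l)" and "\<rho> \<equiv> sqrt (2 * L - l - 2 * ln (c * l))"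
  assumes c: "0 < c" "(C + DIM('a) + 1) * 2 \<le> halfspace_mass_const DIM('a) * c" and c0: "0 \<le> c0"
    and large: "1 \<le> c * l" "25 \<le> 2 * L - l - 2 * ln (c * l)" "prism_excess DIM('a) \<le> l"
      "c0 * l \<le> L" "(4 * real DIM('a)) ^ DIM('a) \<le> L"
  shows "1 - L powr (- C) \<le> measure (sample_law n R :: (nat \<Rightarrow> 'a::euclidean_space) measure)
      {X \<in> space (sample_law n R). cball 0 (\<rho> - 5 / \<rho>) \<subseteq> convex hull (X ` {..<n})}"
proof -
  define d where "d = DIM('a)"
  define t where "t = \<rho> - 1 / \<rho>"
  define \<delta> where "\<delta> = 4 / (R * \<rho>)"
  have "0 < c * l"
    using large(1) by simp
  with c have l: "0 < l"
    by (simp add: zero_less_mult_iff)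
  have d1: "1 \<le> d"
    unfolding d_def using DIM_positive[where 'a='a] by linarith
  then have "4 * real d \<le> (4 * real d) ^ d"
    by (intro self_le_power) auto
  then have L: "4 \<le> L"
    using large(5) d1 unfolding d_def by linarith
  then have "0 < L"
    by simp
  note radii = loglog_radii_bounds[OF l this large(1) c0 large(2-4), folded R_def \<rho>_def]
  have tR: "t\<^sup>2 + prism_excess DIM('a) \<le> R\<^sup>2"
    using radii(6) unfolding t_def .
  have "0 < 1 / \<rho>" "1 / \<rho> \<le> 1"
    using radii(2) by simp_all
  then have t: "1 \<le> t" "0 < t" "t \<le> \<rho>"
    using radii(2) unfolding t_def by linarith+
  have "5 * 5 \<le> R * \<rho>"
    using radii(2,4) by (intro mult_mono) auto
  then have \<delta>: "0 < \<delta>" "\<delta> \<le> 1" and R\<delta>: "R * \<delta> = 4 / \<rho>"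
    using radii(2) unfolding \<delta>_def by (auto simp: divide_le_eq)
  have "5 / \<rho> = 1 / \<rho> + 4 / \<rho>" "5 / \<rho> \<le> 1"
    using radii(2) by (simp_all add: add_divide_distrib[symmetric])
  then have r: "0 \<le> \<rho> - 5 / \<rho>" "\<rho> - 5 / \<rho> \<le> t - R * \<delta>"
    using radii(2) R\<delta> unfolding t_def by linarith+
  have "0 < n"
    using L unfolding L_def by (cases n) auto
  note lower = measure_sample_law_cball_subset_hull_ge[OF this t(1) tR radii(3) \<delta> r]
  have "4 * real d / \<delta> = real d * (R * \<rho>)"
    using radii(2,4) unfolding \<delta>_def by simp
  then have "4 * real d / \<delta> \<le> 3 * real d * L"
    using mult_left_mono[OF radii(5), of "real d"] by (simp add: ac_simps)
  then have "(4 * real d / \<delta> + 3) ^ d \<le> L powr (d + 1)"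
    using net_size_le_powr[of d "4 * real d / \<delta>" L] d1 \<delta> large(5) by (simp add: d_def)
  moreover have "exp (- (halfspace_mass_const d * exp (- t\<^sup>2 / 2) / t) * n) \<le> L powr (- (C + d + 1))"
    using exp_neg_halfspace_mass_le[where d = d, OF c(1) c(2)[folded d_def] large(1)[unfolded l_def]
        radii(1)[unfolded L_def l_def] t(2,3)]
    unfolding L_def .
  ultimately have "(4 * real d / \<delta> + 3) ^ d * exp (- (halfspace_mass_const d * exp (- t\<^sup>2 / 2) / t) * n)
      \<le> L powr (d + 1) * L powr (- (C + d + 1))"
    by (intro mult_mono) auto
  also have "\<dots> = L powr (- C)"
    by (simp add: powr_add[symmetric])
  finally show ?thesis
    using lower unfolding d_def by simp
qed

theorem lemma9p1:
  assumes "DIM('a::euclidean_space) \<ge> 2"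
  shows "\<exists>c0min::real. \<forall>c0\<ge>c0min. \<forall>C::real>0. \<exists>c::real>0. \<exists>c1::real>0.
    \<forall>\<^sub>F n in sequentially.
      (let R = sqrt (2 * ln (real n) + ln ((ln (real n)) powr c0));
           \<rho> = sqrt (2 * ln (real n) - ln (ln (real n)) + ln ((c * ln (ln (real n))) powr (-2)));
           r = \<rho> - 5 * c1\<^sup>2 / \<rho>
       in measure (sample_law n R :: (nat \<Rightarrow> 'a) measure)
            {X \<in> space (sample_law n R). cball 0 r \<subseteq> convex hull (X ` {..<n})}
          \<ge> 1 - (ln (real n)) powr (- C))"
proof (rule exI[of _ 0], intro allI impI)
  fix c0 C :: real
  assume c0: "0 \<le> c0" and "0 < C"
  define c where "c = 2 * (C + DIM('a) + 1) / halfspace_mass_const DIM('a)"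
  have c: "0 < c" "(C + DIM('a) + 1) * 2 \<le> halfspace_mass_const DIM('a) * c"
    using \<open>0 < C\<close> halfspace_mass_const_pos[of "DIM('a)"] by (simp_all add: c_def)
  have "\<forall>\<^sub>F n in sequentially. 1 \<le> c * ln (ln (real n))
      \<and> 25 \<le> 2 * ln (real n) - ln (ln (real n)) - 2 * ln (c * ln (ln (real n)))
      \<and> prism_excess DIM('a) \<le> ln (ln (real n)) \<and> c0 * ln (ln (real n)) \<le> ln (real n)
      \<and> (4 * real DIM('a)) ^ DIM('a) \<le> ln (real n)"
    using c(1) by (intro eventually_conj; real_asymp)
  then show "\<exists>c>0. \<exists>c1>0. \<forall>\<^sub>F n in sequentially.
      (let R = sqrt (2 * ln (real n) + ln ((ln (real n)) powr c0));
           \<rho> = sqrt (2 * ln (real n) - ln (ln (real n)) + ln ((c * ln (ln (real n))) powr (-2)));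
           r = \<rho> - 5 * c1\<^sup>2 / \<rho>
       in measure (sample_law n R :: (nat \<Rightarrow> 'a) measure)
            {X \<in> space (sample_law n R). cball 0 r \<subseteq> convex hull (X ` {..<n})}
          \<ge> 1 - (ln (real n)) powr (- C))"
    using c(1) by (intro exI[of _ c] exI[of _ 1] conjI; simp add: Let_def)
      (elim eventually_mono, intro measure_sample_law_cball_subset_hull_ge_loglog c c0; simp)
qed

end
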